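(* Consider the system $\mathbf{x}_{k+1}=f_k(\mathbf{x}_k,\mathbf{w}_k)$, $\mathbf{y}_k=g_k(\mathbf{x}_k,\mathbf{v}_k)$, $k\in\mathbb{N}_0$, and assume that for every $k\in\mathbb{N}_0$ the uncertain variables $\mathbf{w}_0,\dots,\mathbf{w}_k,\mathbf{v}_0,\dots,\mathbf{v}_k,\mathbf{x}_0$ are unrelated. Then: (i) for every $k\in\mathbb{Z}_+$ and $y_{0:k-1}\in\llbracket\mathbf{y}_{0:k-1}\rrbracket$, \[ \llbracket\mathbf{x}_k\,|\,y_{0:k-1}\rrbracket=f_{k-1}\big(\llbracket\mathbf{x}_{k-1}\,|\,y_{0:k-1}\rrbracket,\llbracket\mathbf{w}_{k-1}\rrbracket\big); \] (ii) for every $k\in\mathbb{N}_0$ and $y_{0:k}\in\llbracket\mathbf{y}_{0:k}\rrbracket$, \[ \llbracket\mathbf{x}_k\,|\,y_{0:k}\rrbracket=\Big[\bigcup_{v_k\in\llbracket\mathbf{v}_k\rrbracket}g_{k,v_k}^{-1}(\{y_k\})\Big]\cap\llbracket\mathbf{x}_k\,|\,y_{0:k-1}\rrbracket, \] where $g_{k,v_k}^{-1}(\{y_k\}):=\{x\in\llbracket\mathbf{x}_k\rrbracket: g_k(x,v_k)=y_k\}$ and $\llbracket\mathbf{x}_0\,|\,y_{0:-1}\rrbracket:=\llbracket\mathbf{x}_0\rrbracket$. In particular these sets give the optimal SMF $X_k^*(y_{0:k})=\llbracket\mathbf{x}_k\,|\,y_{0:k}\rrbracket$.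
   Context: Uncertain variables: fix a nonempty set $\Omega$. An uncertain variable is a (measurable) function $\mathbf{x}\colon\Omega\to\mathcal{X}$; a realization is $x=\mathbf{x}(\omega)$. Tuples such as $\mathbf{y}_{0:k}:=(\mathbf{y}_0,\dots,\mathbf{y}_k)$ are regarded as uncertain variables $\omega\mapsto(\mathbf{y}_0(\omega),\dots,\mathbf{y}_k(\omega))$, with realizations $y_{0:k}$. Range: $\llbracket\mathbf{x}\rrbracket:=\{\mathbf{x}(\omega):\omega\in\Omega\}$; joint range $\llbracket\mathbf{u}_1,\dots,\mathbf{u}_r\rrbracket:=\{(\mathbf{u}_1(\omega),\dots,\mathbf{u}_r(\omega)):\omega\in\Omega\}$. Conditional range: $\llbracket\mathbf{x}\,|\,y\rrbracket:=\{\mathbf{x}(\omega):\omega\in\Omega,\ \mathbf{y}(\omega)=y\}$ (conditioning on several values means conditioning on the tuple). Unrelatedness: $\mathbf{u}_1,\dots,\mathbf{u}_r$ are unrelated if $\llbracket\mathbf{u}_1,\dots,\mathbf{u}_r\rrbracket=\llbracket\mathbf{u}_1\rrbracket\times\cdots\times\llbracket\mathbf{u}_r\rrbracket$. System: $\mathbf{x}_k$ takes values in $\llbracket\mathbf{x}_k\rrbracket\subseteq\mathbb{R}^n$, $\mathbf{w}_k$ in $\llbracket\mathbf{w}_k\rrbracket\subseteq\mathbb{R}^p$, $\mathbf{y}_k$ in $\llbracket\mathbf{y}_k\rrbracket\subseteq\mathbb{R}^m$, $\mathbf{v}_k$ in $\llbracket\mathbf{v}_k\rrbracket\subseteq\mathbb{R}^q$;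 $f_k\colon\llbracket\mathbf{x}_k\rrbracket\times\llbracket\mathbf{w}_k\rrbracket\to\llbracket\mathbf{x}_{k+1}\rrbracket$, $g_k\colon\llbracket\mathbf{x}_k\rrbracket\times\llbracket\mathbf{v}_k\rrbracket\to\llbracket\mathbf{y}_k\rrbracket$, with $\mathbf{x}_{k+1}(\omega)=f_k(\mathbf{x}_k(\omega),\mathbf{w}_k(\omega))$ and $\mathbf{y}_k(\omega)=g_k(\mathbf{x}_k(\omega),\mathbf{v}_k(\omega))$. For sets, $f(S,T):=\{f(s,t):s\in S,t\in T\}$. An SMF is a family of set-valued maps $X_k$ with $\{\mathbf{x}_k(\omega):\mathbf{y}_{0:k}(\omega)=y_{0:k}\}\subseteq X_k(y_{0:k})$ for all $k,y_{0:k}$; it is optimal if it is contained in every other SMF for all $k,y_{0:k}$. *)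

theory Defs
  imports "HOL-Analysis.Analysis"
begin

text \<open>The sample space \<Omega> is modelled by a type 'o (types are nonempty).
  An uncertain variable is a function 'o \<Rightarrow> 'a.\<close>

definition rng :: "('o \<Rightarrow> 'a) \<Rightarrow> 'a set" where
  "rng u = {u \<omega> | \<omega>. True}"

definition crng :: "('o \<Rightarrow> 'a) \<Rightarrow> ('o \<Rightarrow> 'b) \<Rightarrow> 'b \<Rightarrow> 'a set" where
  "crng u c cv = {u \<omega> | \<omega>. c \<omega> = cv}"

text \<open>The tuple u_{0:k-1} = (u_0, ..., u_{k-1}) as an uncertain variable (a list of length k).
  Thus u_{0:k} is tup u (Suc k), and tup u 0 is the empty (constant) tuple.\<close>
definition tup :: "(nat \<Rightarrow> 'o \<Rightarrow> 'a) \<Rightarrow> nat \<Rightarrow> 'o \<Rightarrow> 'a list" where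
  "tup u k \<omega> = map (\<lambda>i. u i \<omega>) [0..<k]"

definition unrelated_wvx ::
  "(nat \<Rightarrow> 'o \<Rightarrow> 'w) \<Rightarrow> (nat \<Rightarrow> 'o \<Rightarrow> 'v) \<Rightarrow> ('o \<Rightarrow> 'x) \<Rightarrow> nat \<Rightarrow> bool" where
  "unrelated_wvx w v x0 k \<longleftrightarrow>
     rng (\<lambda>\<omega>. (tup w (Suc k) \<omega>, tup v (Suc k) \<omega>, x0 \<omega>)) =
       listset (map (\<lambda>i. rng (w i)) [0..<Suc k]) \<times>
       listset (map (\<lambda>i. rng (v i)) [0..<Suc k]) \<times> rng x0"

definition set_app :: "('a \<Rightarrow> 'b \<Rightarrow> 'c) \<Rightarrow> 'a set \<Rightarrow> 'b set \<Rightarrow> 'c set" where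
  "set_app f S T = {f s t | s t. s \<in> S \<and> t \<in> T}"

definition is_SMF ::
  "(nat \<Rightarrow> 'o \<Rightarrow> 'x) \<Rightarrow> (nat \<Rightarrow> 'o \<Rightarrow> 'y) \<Rightarrow> (nat \<Rightarrow> 'y list \<Rightarrow> 'x set) \<Rightarrow> bool" where
  "is_SMF x y X \<longleftrightarrow> (\<forall>k. \<forall>ys \<in> rng (tup y (Suc k)).
      {x k \<omega> | \<omega>. tup y (Suc k) \<omega> = ys} \<subseteq> X k ys)"

definition optimal_SMF ::
  "(nat \<Rightarrow> 'o \<Rightarrow> 'x) \<Rightarrow> (nat \<Rightarrow> 'o \<Rightarrow> 'y) \<Rightarrow> (nat \<Rightarrow> 'y list \<Rightarrow> 'x set) \<Rightarrow> bool" where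
  "optimal_SMF x y X \<longleftrightarrow> is_SMF x y X \<and>
     (\<forall>X'. is_SMF x y X' \<longrightarrow> (\<forall>k. \<forall>ys \<in> rng (tup y (Suc k)). X k ys \<subseteq> X' k ys))"

end

theory Submission
  imports Defs
begin

text \<open>Unrelatedness allows us to keep the initial state and all noise values before time k of a
  sample \<omega>, while replacing the current noises (w k, v k) by arbitrary values of their ranges.
  The new sample has the same states up to time k and the same outputs before time k, so every
  combination of a state compatible with the past outputs and admissible current noises is
  realised. This gives the nontrivial inclusions of both recursions; optimality of the
  conditional ranges holds by definition.\<close>

lemma in_listset_iff:
  "xs \<in> listset As \<longleftrightarrow> length xs = length As \<and> (\<forall>i<length As. xs ! i \<in> As ! i)"
proof (induction As arbitrary: xs)
  case Nil
  then show ?case by auto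
next
  case (Cons A As)
  then show ?case
    by (cases xs) (auto simp: set_Cons_def nth_Cons split: nat.splits)
qed

lemma length_tup [simp]: "length (tup u k \<omega>) = k"
  by (simp add: tup_def)

lemma tup_Suc: "tup u (Suc k) \<omega> = tup u k \<omega> @ [u k \<omega>]"
  by (simp add: tup_def)

lemma tup_eq_iff: "tup u k \<omega>' = tup u k \<omega> \<longleftrightarrow> (\<forall>i<k. u i \<omega>' = u i \<omega>)"
  by (auto simp: tup_def map_eq_conv)

lemma unrelated_wvx_resample:
  assumes "unrelated_wvx w v x0 k" and "a \<in> rng (w k)" and "b \<in> rng (v k)"
  obtains \<omega>' where "x0 \<omega>' = x0 \<omega>" and "\<forall>i<k. w i \<omega>' = w i \<omega> \<and> v i \<omega>' = v i \<omega>"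
    and "w k \<omega>' = a" and "v k \<omega>' = b"
proof -
  define W where "W = map (\<lambda>i. if i = k then a else w i \<omega>) [0..<Suc k]"
  define V where "V = map (\<lambda>i. if i = k then b else v i \<omega>) [0..<Suc k]"
  have "(W, V, x0 \<omega>) \<in> rng (\<lambda>\<omega>. (tup w (Suc k) \<omega>, tup v (Suc k) \<omega>, x0 \<omega>))"
    using assms unfolding unrelated_wvx_def W_def V_def
    by (auto simp: in_listset_iff rng_def nth_append)
  then obtain \<omega>' where "tup w (Suc k) \<omega>' = W" "tup v (Suc k) \<omega>' = V" "x0 \<omega>' = x0 \<omega>"
    unfolding rng_def by auto
  then have "\<forall>i<Suc k. w i \<omega>' = (if i = k then a else w i \<omega>) \<and> v i \<omega>' = (if i = k then b else v i \<omega>)"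
    and "x0 \<omega>' = x0 \<omega>"
    unfolding W_def V_def tup_def by (auto simp: map_eq_conv simp del: upt_Suc)
  then show thesis
    using that[of \<omega>'] by auto
qed

lemma state_eq_if_inputs_eq:
  assumes dyn: "\<And>k \<omega>. x (Suc k) \<omega> = f k (x k \<omega>) (w k \<omega>)"
    and "x 0 \<omega>' = x 0 \<omega>" and "\<forall>i<k. w i \<omega>' = w i \<omega>"
  shows "x k \<omega>' = x k \<omega>"
  using assms(2,3) by (induction k) (simp_all add: dyn)

lemma optimal_SMF_crng: "optimal_SMF x y (\<lambda>k ys. crng (x k) (tup y (Suc k)) ys)"
  unfolding optimal_SMF_def is_SMF_def crng_def by auto

context
  fixes x :: "nat \<Rightarrow> 'o \<Rightarrow> 'x" and w :: "nat \<Rightarrow> 'o \<Rightarrow> 'w"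
    and y :: "nat \<Rightarrow> 'o \<Rightarrow> 'y" and v :: "nat \<Rightarrow> 'o \<Rightarrow> 'v"
    and f :: "nat \<Rightarrow> 'x \<Rightarrow> 'w \<Rightarrow> 'x" and g :: "nat \<Rightarrow> 'x \<Rightarrow> 'v \<Rightarrow> 'y"
  assumes dyn: "\<And>k \<omega>. x (Suc k) \<omega> = f k (x k \<omega>) (w k \<omega>)"
    and obs: "\<And>k \<omega>. y k \<omega> = g k (x k \<omega>) (v k \<omega>)"
    and unrel: "\<And>k. unrelated_wvx w v (x 0) k"
begin

lemma resample_current_noise:
  assumes "a \<in> rng (w k)" and "b \<in> rng (v k)"
  obtains \<omega>' where "tup y k \<omega>' = tup y k \<omega>" and "x k \<omega>' = x k \<omega>"
    and "w k \<omega>' = a" and "v k \<omega>' = b"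
proof -
  obtain \<omega>' where init: "x 0 \<omega>' = x 0 \<omega>" and past: "\<forall>i<k. w i \<omega>' = w i \<omega> \<and> v i \<omega>' = v i \<omega>"
    and "w k \<omega>' = a" and "v k \<omega>' = b"
    using unrelated_wvx_resample[OF unrel assms] by blast
  have states: "x j \<omega>' = x j \<omega>" if "j \<le> k" for j
    using state_eq_if_inputs_eq[of x f w, OF dyn init] past that by auto
  have "tup y k \<omega>' = tup y k \<omega>"
    unfolding tup_eq_iff using states past by (simp add: obs)
  with states \<open>w k \<omega>' = a\<close> \<open>v k \<omega>' = b\<close> show thesis
    by (intro that) auto
qed

lemma crng_prediction:
  "crng (x (Suc k)) (tup y (Suc k)) ys =
     set_app (f k) (crng (x k) (tup y (Suc k)) ys) (rng (w k))"
proof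
  show "crng (x (Suc k)) (tup y (Suc k)) ys \<subseteq> set_app (f k) (crng (x k) (tup y (Suc k)) ys) (rng (w k))"
    by (auto simp: crng_def set_app_def rng_def dyn)
next
  show "set_app (f k) (crng (x k) (tup y (Suc k)) ys) (rng (w k)) \<subseteq> crng (x (Suc k)) (tup y (Suc k)) ys"
  proof
    fix z assume "z \<in> set_app (f k) (crng (x k) (tup y (Suc k)) ys) (rng (w k))"
    then obtain \<omega> a where ys: "tup y (Suc k) \<omega> = ys" and a: "a \<in> rng (w k)"
      and z: "z = f k (x k \<omega>) a"
      by (auto simp: crng_def set_app_def)
    have "v k \<omega> \<in> rng (v k)" by (auto simp: rng_def)
    then obtain \<omega>' where "tup y k \<omega>' = tup y k \<omega>" "x k \<omega>' = x k \<omega>" "w k \<omega>' = a" "v k \<omega>' = v k \<omega>"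
      using resample_current_noise[OF a] by blast
    then have "tup y (Suc k) \<omega>' = ys" and "x (Suc k) \<omega>' = z"
      using ys z by (simp_all add: tup_Suc obs dyn)
    then show "z \<in> crng (x (Suc k)) (tup y (Suc k)) ys"
      by (auto simp: crng_def)
  qed
qed

lemma crng_measurement_update:
  assumes len: "length ys = Suc k"
  shows "crng (x k) (tup y (Suc k)) ys =
           (\<Union>vk \<in> rng (v k). {xx \<in> rng (x k). g k xx vk = ys ! k})
             \<inter> crng (x k) (tup y k) (take k ys)"
proof
  show "crng (x k) (tup y (Suc k)) ys \<subseteq> (\<Union>vk \<in> rng (v k). {xx \<in> rng (x k). g k xx vk = ys ! k})
          \<inter> crng (x k) (tup y k) (take k ys)"
  proof
    fix z assume "z \<in> crng (x k) (tup y (Suc k)) ys"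
    then obtain \<omega> where ys: "ys = tup y k \<omega> @ [y k \<omega>]" and z: "z = x k \<omega>"
      by (auto simp: crng_def tup_Suc)
    have "z \<in> {xx \<in> rng (x k). g k xx (v k \<omega>) = ys ! k}"
      using ys z by (auto simp: rng_def nth_append obs)
    moreover have "v k \<omega> \<in> rng (v k)" and "z \<in> crng (x k) (tup y k) (take k ys)"
      using ys z by (auto simp: rng_def crng_def)
    ultimately show "z \<in> (\<Union>vk \<in> rng (v k). {xx \<in> rng (x k). g k xx vk = ys ! k})
                        \<inter> crng (x k) (tup y k) (take k ys)"
      by blast
  qed
next
  show "(\<Union>vk \<in> rng (v k). {xx \<in> rng (x k). g k xx vk = ys ! k})
          \<inter> crng (x k) (tup y k) (take k ys) \<subseteq> crng (x k) (tup y (Suc k)) ys"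
  proof
    fix z assume "z \<in> (\<Union>vk \<in> rng (v k). {xx \<in> rng (x k). g k xx vk = ys ! k})
                        \<inter> crng (x k) (tup y k) (take k ys)"
    then obtain vk \<omega> where vk: "vk \<in> rng (v k)" and g: "g k z vk = ys ! k"
      and past: "tup y k \<omega> = take k ys" and z: "z = x k \<omega>"
      by (auto simp: crng_def)
    have "w k \<omega> \<in> rng (w k)" by (auto simp: rng_def)
    then obtain \<omega>' where "tup y k \<omega>' = tup y k \<omega>" "x k \<omega>' = x k \<omega>" "v k \<omega>' = vk"
      using resample_current_noise[OF _ vk] by blast
    moreover have "ys = take k ys @ [ys ! k]"
      using len by (metis lessI order_refl take_Suc_conv_app_nth take_all)
    ultimately have "tup y (Suc k) \<omega>' = ys" and "x k \<omega>' = z"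
      using past g z by (simp_all add: tup_Suc obs)
    then show "z \<in> crng (x k) (tup y (Suc k)) ys"
      by (auto simp: crng_def)
  qed
qed

end

theorem theorem2:
  fixes x :: "nat \<Rightarrow> 'o \<Rightarrow> real ^ 'n"
    and w :: "nat \<Rightarrow> 'o \<Rightarrow> real ^ 'p"
    and y :: "nat \<Rightarrow> 'o \<Rightarrow> real ^ 'm"
    and v :: "nat \<Rightarrow> 'o \<Rightarrow> real ^ 'q"
    and f :: "nat \<Rightarrow> real ^ 'n \<Rightarrow> real ^ 'p \<Rightarrow> real ^ 'n"
    and g :: "nat \<Rightarrow> real ^ 'n \<Rightarrow> real ^ 'q \<Rightarrow> real ^ 'm"
  assumes dyn: "\<And>k \<omega>. x (Suc k) \<omega> = f k (x k \<omega>) (w k \<omega>)"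
    and obs: "\<And>k \<omega>. y k \<omega> = g k (x k \<omega>) (v k \<omega>)"
    and unrel: "\<And>k. unrelated_wvx w v (x 0) k"
  shows "(\<forall>k. \<forall>ys \<in> rng (tup y (Suc k)).
            crng (x (Suc k)) (tup y (Suc k)) ys =
            set_app (f k) (crng (x k) (tup y (Suc k)) ys) (rng (w k)))
       \<and> (\<forall>k. \<forall>ys \<in> rng (tup y (Suc k)).
            crng (x k) (tup y (Suc k)) ys =
            (\<Union>vk \<in> rng (v k). {xx \<in> rng (x k). g k xx vk = ys ! k})
              \<inter> crng (x k) (tup y k) (take k ys))
       \<and> optimal_SMF x y (\<lambda>k ys. crng (x k) (tup y (Suc k)) ys)"
proof (intro conjI ballI allI)
  fix k ys
  show "crng (x (Suc k)) (tup y (Suc k)) ys =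
          set_app (f k) (crng (x k) (tup y (Suc k)) ys) (rng (w k))"
    by (rule crng_prediction) (rule dyn obs unrel)+
  assume "ys \<in> rng (tup y (Suc k))"
  then have len: "length ys = Suc k"
    by (auto simp: rng_def)
  show "crng (x k) (tup y (Suc k)) ys =
               (\<Union>vk \<in> rng (v k). {xx \<in> rng (x k). g k xx vk = ys ! k})
                 \<inter> crng (x k) (tup y k) (take k ys)"
    by (rule crng_measurement_update) (rule dyn obs unrel len)+
next
  show "optimal_SMF x y (\<lambda>k ys. crng (x k) (tup y (Suc k)) ys)"
    by (rule optimal_SMF_crng)
qed

end
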